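(* Consider the AdaDROPS scheme described in the context (with either Option I or Option II), let $\bar{\mathcal{I}}$ be the set at which $\mathcal{I}^{(k)}$ eventually stabilizes, and assume the iterates $x^{(k)}$ converge to some $\tilde{x}\in\mathbb{R}^n$. Let $\tilde\beta=-\frac1\lambda A^\top(A\tilde{x}-y)$, $\bar L=L-P_{T_z(\bar{\mathcal{I}})}LP_{T(\bar{\mathcal{I}})^\perp}$ and $\bar u=\bar L(\bar L^\top\bar L)^{-1}\tilde\beta$. Then $\|\bar u_{J_t}\|\le1$ for every $t\in\{1,\dots,N\}\setminus\bar{\mathcal{I}}$.
   Context: Let $n,N\in\mathbb{N}$, let $G_1,\dots,G_N\subseteq\{1,\dots,n\}$ be nonempty groups, possibly overlapping, with $\bigcup_iG_i=\{1,\dots,n\}$, and weights $w_i>0$. $x_G$ is the subvector of $x$ indexed by $G$ (increasing order). Let $p=\sum_i|G_i|$, partition $\{1,\dots,p\}$ into consecutive blocks $J_i=\{\sum_{j<i}|G_j|+1,\dots,\sum_{j\le i}|G_j|\}$, and define $L\in\mathbb{R}^{p\times n}$ by $(Lx)_{J_i}=w_ix_{G_i}$; $\|z\|_{1,2}=\sum_i\|z_{J_i}\|$ (Euclidean). Let $A\in\mathbb{R}^{m\times n}$, $y\in\mathbb{R}^m$, $\lambda>0$. For $\mathcal{I}\subseteq\{1,\dots,N\}$: $\mathcal{E}(\mathcal{I})=\{1,\dots,n\}\setminus\bigcup_{t\notin\mathcal{I}}G_t$, $T(\mathcal{I})=\{x:\mathrm{supp}(x)\subseteq\mathcal{E}(\mathcal{I})\}$,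 $\mathcal{E}_z(\mathcal{I})=\bigcup_{t\in\mathcal{I}}J_t$, $T_z(\mathcal{I})=\{z:\mathrm{supp}(z)\subseteq\mathcal{E}_z(\mathcal{I})\}$, $\widehat{L}(\mathcal{I})=L-P_{T_z(\mathcal{I})}LP_{T(\mathcal{I})^\perp}$, with $P_T$ the orthogonal (coordinate) projection onto $T$; $\widehat{L}(\mathcal{I})^\top\widehat{L}(\mathcal{I})$ is invertible. AdaDROPS scheme: from $\mathcal{I}^{(0)}$, $x^{(0)}$, at step $k$ an inner solver produces $x^{(k+1)}$ (for the problem $\min_x\frac1{2\lambda}\|AP_{T(\mathcal{I}^{(k)})}x-y\|^2+\|LP_{T(\mathcal{I}^{(k)})}x\|_{1,2}$); with $\beta^{(k+1)}=-\frac1\lambda A^\top(Ax^{(k+1)}-y)$ the index set is updated by Option I: $\mathcal{I}^{(k+1)}=\mathcal{I}^{(k)}\cup\{t:\|\beta^{(k+1)}_{G_t}\|\ge w_t\}$, or Option II: with $u^{(k+1)}=\widehat{L}(\mathcal{I}^{(k)})(\widehat{L}(\mathcal{I}^{(k)})^\top\widehat{L}(\mathcal{I}^{(k)}))^{-1}\beta^{(k+1)}$, $\mathcal{I}^{(k+1)}=\mathcal{I}^{(k)}\cup\{t:\|u^{(k+1)}_{J_t}\|\ge1\}$. The nondecreasing sequence $\mathcal{I}^{(k)}$ stabilizes at some $\bar{\mathcal{I}}$. *)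

theory Defs
  imports "Jordan_Normal_Form.Matrix"
begin

text \<open>Conventions: all indices are 0-based. Coordinates of x are 0..<n, groups are
  indexed 0..<N, G t is a subset of {0..<n}, and the rows of L are 0..<p.\<close>

definition grp_off :: "(nat \<Rightarrow> nat set) \<Rightarrow> nat \<Rightarrow> nat" where
  "grp_off G i = (\<Sum>j<i. card (G j))"

definition Jblk :: "(nat \<Rightarrow> nat set) \<Rightarrow> nat \<Rightarrow> nat set" where
  "Jblk G t = {grp_off G t ..< grp_off G (Suc t)}"

text \<open>The matrix L (p x n, p = grp_off G N): (L x)_{J_t} = w_t x_{G_t}, G_t in increasing order.\<close>
definition Lmat :: "nat \<Rightarrow> nat \<Rightarrow> (nat \<Rightarrow> nat set) \<Rightarrow> (nat \<Rightarrow> real) \<Rightarrow> real mat" where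
  "Lmat n N G w = mat (grp_off G N) n (\<lambda>(r, c).
     \<Sum>t<N. if r \<in> Jblk G t \<and> c = sorted_list_of_set (G t) ! (r - grp_off G t) then w t else 0)"

definition subnorm :: "real vec \<Rightarrow> nat set \<Rightarrow> real" where
  "subnorm v S = sqrt (\<Sum>i\<in>S. (v $ i)\<^sup>2)"

definition Eset :: "nat \<Rightarrow> nat \<Rightarrow> (nat \<Rightarrow> nat set) \<Rightarrow> nat set \<Rightarrow> nat set" where
  "Eset n N G I = {0..<n} - (\<Union>t\<in>{0..<N} - I. G t)"

definition Ezset :: "(nat \<Rightarrow> nat set) \<Rightarrow> nat set \<Rightarrow> nat set" where
  "Ezset G I = (\<Union>t\<in>I. Jblk G t)"

definition coord_proj :: "nat \<Rightarrow> nat set \<Rightarrow> real mat" where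
  "coord_proj d S = mat d d (\<lambda>(i, j). if i = j \<and> i \<in> S then 1 else 0)"

text \<open>L-hat(I) = L - P_{T_z(I)} L P_{T(I)^\<bottom>}.\<close>
definition Lhat :: "nat \<Rightarrow> nat \<Rightarrow> (nat \<Rightarrow> nat set) \<Rightarrow> (nat \<Rightarrow> real) \<Rightarrow> nat set \<Rightarrow> real mat" where
  "Lhat n N G w I = Lmat n N G w
     - coord_proj (grp_off G N) (Ezset G I) * Lmat n N G w
       * (1\<^sub>m n - coord_proj n (Eset n N G I))"

definition mat_inv :: "real mat \<Rightarrow> real mat" where
  "mat_inv M = (SOME B. inverts_mat M B \<and> inverts_mat B M)"

definition beta_of :: "real mat \<Rightarrow> real vec \<Rightarrow> real \<Rightarrow> real vec \<Rightarrow> real vec" where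
  "beta_of A y lam x = (- (1 / lam)) \<cdot>\<^sub>v (transpose_mat A *\<^sub>v (A *\<^sub>v x - y))"

definition u_of :: "nat \<Rightarrow> nat \<Rightarrow> (nat \<Rightarrow> nat set) \<Rightarrow> (nat \<Rightarrow> real) \<Rightarrow> nat set \<Rightarrow> real vec \<Rightarrow> real vec" where
  "u_of n N G w I b = (let M = Lhat n N G w I in
     M * mat_inv (transpose_mat M * M) *\<^sub>v b)"

definition ada_option1 where
  "ada_option1 N G w A y lam (Is :: nat \<Rightarrow> nat set) (x :: nat \<Rightarrow> real vec) \<longleftrightarrow>
     (\<forall>k. Is (Suc k) = Is k \<union>
        {t \<in> {0..<N}. subnorm (beta_of A y lam (x (Suc k))) (G t) \<ge> w t})"

definition ada_option2 where
  "ada_option2 n N G w A y lam (Is :: nat \<Rightarrow> nat set) (x :: nat \<Rightarrow> real vec) \<longleftrightarrow>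
     (\<forall>k. Is (Suc k) = Is k \<union>
        {t \<in> {0..<N}. subnorm (u_of n N G w (Is k) (beta_of A y lam (x (Suc k)))) (Jblk G t) \<ge> 1})"

end

theory Submission
  imports Defs
begin

text \<open>Once the index sets have stabilised at Ibar, a group t outside Ibar is never added, so
  for all large k the quantity tested by the update rule stays below its threshold. Both tested
  quantities depend continuously on the iterate (beta is affine in x, and for the fixed set Ibar
  the dual vector u is linear in beta), so the limit obeys the non-strict bound. For Option II
  this is the claim. For Option I it gives \<parallel>beta_{G_t}\<parallel> \<le> w_t, and we conclude from
  \<parallel>u_{J_t}\<parallel> \<le> \<parallel>beta_{G_t}\<parallel> / w_t: every row of L-hat has at most one nonzero entry, so
  L-hat^T L-hat is diagonal, and since t \<notin> Ibar no row r of J_t is masked, so it still carries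
  w_t in the column c of G_t it selects. Hence u_r = w_t beta_c / (L-hat^T L-hat)_{cc}, where
  the diagonal entry is at least w_t^2.\<close>

section \<open>Componentwise limits\<close>

lemma tendsto_mult_mat_vec:
  fixes Q :: "real mat" and v :: "nat \<Rightarrow> real vec"
  assumes lim: "\<forall>i<d. (\<lambda>k. v k $ i) \<longlonglongrightarrow> v' $ i"
    and dim: "\<forall>k. dim_vec (v k) = d" "dim_vec v' = d"
  shows "\<forall>r<dim_row Q. (\<lambda>k. (Q *\<^sub>v v k) $ r) \<longlonglongrightarrow> (Q *\<^sub>v v') $ r"
  using assms by (auto simp: scalar_prod_def intro!: tendsto_sum tendsto_mult_left)

lemma tendsto_beta_of:
  assumes A: "A \<in> carrier_mat m n" and y: "y \<in> carrier_vec m"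
    and x: "\<forall>k. x k \<in> carrier_vec n" and xt: "xt \<in> carrier_vec n"
    and lim: "\<forall>i<n. (\<lambda>k. x k $ i) \<longlonglongrightarrow> xt $ i"
  shows "\<forall>j<n. (\<lambda>k. beta_of A y lam (x k) $ j) \<longlonglongrightarrow> beta_of A y lam xt $ j"
proof -
  have "\<forall>i<m. (\<lambda>k. (A *\<^sub>v x k) $ i) \<longlonglongrightarrow> (A *\<^sub>v xt) $ i"
    using tendsto_mult_mat_vec[OF lim, of A] A x xt by auto
  then have "\<forall>i<m. (\<lambda>k. (A *\<^sub>v x k - y) $ i) \<longlonglongrightarrow> (A *\<^sub>v xt - y) $ i"
    using y by (auto intro!: tendsto_diff)
  then have res: "\<forall>j<n. (\<lambda>k. (transpose_mat A *\<^sub>v (A *\<^sub>v x k - y)) $ j)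
      \<longlonglongrightarrow> (transpose_mat A *\<^sub>v (A *\<^sub>v xt - y)) $ j"
    using tendsto_mult_mat_vec[of m _ _ "transpose_mat A"] A y by auto
  show ?thesis
  proof (intro allI impI)
    fix j assume j: "j < n"
    have "(\<lambda>k. - (1 / lam) * (transpose_mat A *\<^sub>v (A *\<^sub>v x k - y)) $ j)
        \<longlonglongrightarrow> - (1 / lam) * (transpose_mat A *\<^sub>v (A *\<^sub>v xt - y)) $ j"
      using res j by (intro tendsto_mult_left) blast
    then show "(\<lambda>k. beta_of A y lam (x k) $ j) \<longlonglongrightarrow> beta_of A y lam xt $ j"
      using A j unfolding beta_of_def by simp
  qed
qed

lemma tendsto_subnorm:
  assumes "finite S" "\<forall>i\<in>S. (\<lambda>k. v k $ i) \<longlonglongrightarrow> v' $ i"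
  shows "(\<lambda>k. subnorm (v k) S) \<longlonglongrightarrow> subnorm v' S"
  unfolding subnorm_def using assms by (auto intro!: tendsto_real_sqrt tendsto_sum tendsto_power)

section \<open>Monotone index-set updates\<close>

lemma union_update_subset:
  assumes "\<forall>k. Is (Suc k) = Is k \<union> {t \<in> S. P k t}" "Is 0 \<subseteq> S"
  shows "Is k \<subseteq> S"
  using assms by (induction k) auto

lemma union_update_stable_excludes:
  assumes "\<forall>k. Is (Suc k) = Is k \<union> {t \<in> S. P k t}" "\<forall>k\<ge>K. Is k = Ibar"
    and "t \<in> S - Ibar" "k \<ge> K"
  shows "\<not> P k t"
  using assms by (metis (mono_tags, lifting) DiffD1 DiffD2 UnCI le_SucI mem_Collect_eq)

section \<open>Coordinate projections and diagonal Gram matrices\<close>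

lemma index_coord_proj_mult:
  fixes X :: "real mat"
  assumes "X \<in> carrier_mat d k" "i < d" "j < k"
  shows "(coord_proj d S * X) $$ (i, j) = (if i \<in> S then X $$ (i, j) else 0)"
proof -
  have "(coord_proj d S * X) $$ (i, j) = (\<Sum>l\<in>{0..<d}. (if i = l \<and> i \<in> S then 1 else 0) * X $$ (l, j))"
    using assms by (simp add: coord_proj_def scalar_prod_def)
  also have "\<dots> = (\<Sum>l\<in>{0..<d}. if l = i then (if i \<in> S then X $$ (i, j) else 0) else 0)"
    by (rule sum.cong) auto
  finally show ?thesis using assms by simp
qed

lemma index_mult_compl_coord_proj:
  fixes X :: "real mat"
  assumes "X \<in> carrier_mat d k" "i < d" "j < k"
  shows "(X * (1\<^sub>m k - coord_proj k S)) $$ (i, j) = (if j \<in> S then 0 else X $$ (i, j))"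
proof -
  have "(X * (1\<^sub>m k - coord_proj k S)) $$ (i, j)
      = (\<Sum>l\<in>{0..<k}. X $$ (i, l) * (if l = j \<and> j \<notin> S then 1 else 0))"
    using assms by (auto simp: coord_proj_def scalar_prod_def intro!: sum.cong)
  also have "\<dots> = (\<Sum>l\<in>{0..<k}. if l = j then (if j \<in> S then 0 else X $$ (i, j)) else 0)"
    by (rule sum.cong) auto
  finally show ?thesis using assms by simp
qed

lemma index_mask_coord_proj:
  fixes L :: "real mat"
  assumes L: "L \<in> carrier_mat p n" and "r < p" "c < n"
  shows "(L - coord_proj p S * L * (1\<^sub>m n - coord_proj n T)) $$ (r, c)
    = (if r \<in> S \<and> c \<notin> T then 0 else L $$ (r, c))"
proof -
  have P: "coord_proj p S \<in> carrier_mat p p" and Q: "1\<^sub>m n - coord_proj n T \<in> carrier_mat n n"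
    by (auto simp: coord_proj_def)
  have "coord_proj p S * L * (1\<^sub>m n - coord_proj n T) = coord_proj p S * (L * (1\<^sub>m n - coord_proj n T))"
    using P L Q by (rule assoc_mult_mat)
  then have "(coord_proj p S * L * (1\<^sub>m n - coord_proj n T)) $$ (r, c)
      = (if r \<in> S \<and> c \<notin> T then L $$ (r, c) else 0)"
    using assms index_coord_proj_mult[OF mult_carrier_mat[OF L Q]] index_mult_compl_coord_proj[OF L]
    by simp
  then show ?thesis
    using assms carrier_matD[OF P] carrier_matD[OF Q] by simp
qed

definition single_nonzero_rows :: "'a::zero mat \<Rightarrow> bool" where
  "single_nonzero_rows M \<longleftrightarrow> (\<forall>r<dim_row M. \<forall>i<dim_col M. \<forall>j<dim_col M.
     M $$ (r, i) \<noteq> 0 \<longrightarrow> M $$ (r, j) \<noteq> 0 \<longrightarrow> i = j)"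

lemma diagonal_gram_mat:
  fixes M :: "'a::comm_ring_1 mat"
  assumes "single_nonzero_rows M"
  shows "diagonal_mat (transpose_mat M * M)"
  unfolding diagonal_mat_def
proof (intro allI impI)
  fix i j assume "i < dim_row (transpose_mat M * M)" "j < dim_col (transpose_mat M * M)" "i \<noteq> j"
  then have ij: "i < dim_col M" "j < dim_col M" "i \<noteq> j" by simp_all
  have "M $$ (r, i) * M $$ (r, j) = 0" if "r < dim_row M" for r
  proof -
    have "M $$ (r, i) = 0 \<or> M $$ (r, j) = 0"
      using assms ij that unfolding single_nonzero_rows_def by blast
    then show ?thesis by auto
  qed
  then show "(transpose_mat M * M) $$ (i, j) = 0"
    using ij by (auto simp: scalar_prod_def intro!: sum.neutral)
qed

lemma gram_mat_diag_ge:
  fixes M :: "real mat"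
  assumes "r < dim_row M" "c < dim_col M"
  shows "(M $$ (r, c))\<^sup>2 \<le> (transpose_mat M * M) $$ (c, c)"
proof -
  have "(transpose_mat M * M) $$ (c, c) = (\<Sum>l\<in>{0..<dim_row M}. (M $$ (l, c))\<^sup>2)"
    using assms by (auto simp: scalar_prod_def power2_eq_square intro!: sum.cong)
  then show ?thesis
    using assms by (auto intro!: member_le_sum)
qed

lemma diagonal_mat_mult_vec_index:
  fixes D :: "'a::comm_ring_1 mat"
  assumes "diagonal_mat D" "D \<in> carrier_mat n n" "v \<in> carrier_vec n" "c < n"
  shows "(D *\<^sub>v v) $ c = D $$ (c, c) * v $ c"
proof -
  have "(D *\<^sub>v v) $ c = (\<Sum>l\<in>{0..<n}. D $$ (c, l) * v $ l)"
    using assms by (simp add: scalar_prod_def)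
  also have "\<dots> = (\<Sum>l\<in>{0..<n}. if l = c then D $$ (c, c) * v $ c else 0)"
    by (rule sum.cong) (use assms in \<open>auto simp: diagonal_mat_def\<close>)
  finally show ?thesis using assms by simp
qed

lemma diagonal_mat_right_inverse_mult_vec:
  fixes D B :: "'a::field mat"
  assumes diag: "diagonal_mat D" and D: "D \<in> carrier_mat n n" and B: "B \<in> carrier_mat n n"
    and DB: "D * B = 1\<^sub>m n" and b: "b \<in> carrier_vec n" and c: "c < n"
  shows "(B *\<^sub>v b) $ c = b $ c / D $$ (c, c)"
proof -
  have "(D * B) $$ (c, c) = (D *\<^sub>v col B c) $ c"
    using D B c by simp
  also have "\<dots> = D $$ (c, c) * B $$ (c, c)"
    using diagonal_mat_mult_vec_index[OF diag D _ c] B c by simp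
  finally have "D $$ (c, c) \<noteq> 0"
    using DB c by auto
  moreover have "D *\<^sub>v (B *\<^sub>v b) = b"
    using assoc_mult_mat_vec[OF D B b] DB b by simp
  then have "b $ c = D $$ (c, c) * (B *\<^sub>v b) $ c"
    using diagonal_mat_mult_vec_index[OF diag D _ c, of "B *\<^sub>v b"] B b by auto
  ultimately show ?thesis
    by (simp add: field_simps)
qed

lemma mat_inv_right:
  assumes "invertible_mat D" "D \<in> carrier_mat n n"
  shows "mat_inv D \<in> carrier_mat n n" "D * mat_inv D = 1\<^sub>m n"
proof -
  have inv: "inverts_mat D (mat_inv D) \<and> inverts_mat (mat_inv D) D"
    using assms(1) unfolding invertible_mat_def mat_inv_def by (metis (mono_tags, lifting) someI)
  then show DB: "D * mat_inv D = 1\<^sub>m n"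
    using assms(2) unfolding inverts_mat_def by auto
  have "dim_row (mat_inv D) = n"
    using inv assms(2) unfolding inverts_mat_def by (metis carrier_matD(2) index_mult_mat(3) index_one_mat(3))
  moreover have "dim_col (mat_inv D) = n"
    using arg_cong[OF DB, of dim_col] by simp
  ultimately show "mat_inv D \<in> carrier_mat n n" by auto
qed

section \<open>The block structure of L\<close>

lemma grp_off_Suc [simp]: "grp_off G (Suc t) = grp_off G t + card (G t)"
  unfolding grp_off_def by simp

lemma grp_off_mono: "a \<le> b \<Longrightarrow> grp_off G a \<le> grp_off G b"
  unfolding grp_off_def by (rule sum_mono2) auto

lemma Jblk_subset: "t < N \<Longrightarrow> Jblk G t \<subseteq> {0..<grp_off G N}"
  using grp_off_mono[of "Suc t" N G] unfolding Jblk_def by auto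

lemma Jblk_disjoint:
  assumes "r \<in> Jblk G t" "r \<in> Jblk G s"
  shows "t = s"
proof (rule ccontr)
  assume "t \<noteq> s"
  then have "Suc t \<le> s \<or> Suc s \<le> t" by arith
  then show False
    using assms grp_off_mono[of "Suc t" s G] grp_off_mono[of "Suc s" t G]
    unfolding Jblk_def by auto
qed

definition blk_col :: "(nat \<Rightarrow> nat set) \<Rightarrow> nat \<Rightarrow> nat \<Rightarrow> nat" where
  "blk_col G t r = sorted_list_of_set (G t) ! (r - grp_off G t)"

lemma bij_betw_blk_col:
  assumes "finite (G t)"
  shows "bij_betw (blk_col G t) (Jblk G t) (G t)"
proof -
  let ?cs = "sorted_list_of_set (G t)"
  have "bij_betw (\<lambda>r. r - grp_off G t) (Jblk G t) {..<length ?cs}"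
    by (rule bij_betw_byWitness[where f' = "\<lambda>i. i + grp_off G t"]) (auto simp: Jblk_def assms)
  moreover have "bij_betw ((!) ?cs) {..<length ?cs} (G t)"
    using assms by (intro bij_betw_nth) auto
  ultimately show ?thesis
    unfolding blk_col_def using bij_betw_trans by (auto simp: comp_def)
qed

lemma blk_col_less:
  assumes "G t \<subseteq> {0..<n}" "r \<in> Jblk G t"
  shows "blk_col G t r < n"
  using bij_betw_apply[OF bij_betw_blk_col assms(2)] assms(1) finite_subset by fastforce

lemma Lmat_carrier: "Lmat n N G w \<in> carrier_mat (grp_off G N) n"
  unfolding Lmat_def by simp

lemma index_Lmat:
  assumes "r < grp_off G N" "c < n"
  shows "Lmat n N G w $$ (r, c) = (\<Sum>t<N. if r \<in> Jblk G t \<and> c = blk_col G t r then w t else 0)"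
  using assms unfolding Lmat_def blk_col_def by simp

lemma index_Lmat_Jblk:
  assumes s: "s < N" "r \<in> Jblk G s" and c: "c < n"
  shows "Lmat n N G w $$ (r, c) = (if c = blk_col G s r then w s else 0)"
proof -
  have r: "r < grp_off G N"
    using Jblk_subset[OF s(1), of G] s(2) by auto
  have "Lmat n N G w $$ (r, c) = (\<Sum>t<N. if t = s then (if c = blk_col G s r then w s else 0) else 0)"
    unfolding index_Lmat[OF r c]
  proof (rule sum.cong)
    fix t
    show "(if r \<in> Jblk G t \<and> c = blk_col G t r then w t else 0)
        = (if t = s then (if c = blk_col G s r then w s else 0) else 0)"
      using Jblk_disjoint[OF _ s(2), of t] s(2) by (cases "t = s") auto
  qed simp
  then show ?thesis
    using s(1) by simp
qed

lemma Lmat_nonzero_imp_blk_col: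
  assumes "r < grp_off G N" "c < n" "Lmat n N G w $$ (r, c) \<noteq> 0"
  obtains s where "r \<in> Jblk G s" "c = blk_col G s r"
proof -
  have "(\<Sum>t<N. if r \<in> Jblk G t \<and> c = blk_col G t r then w t else 0) \<noteq> 0"
    using assms(3) unfolding index_Lmat[OF assms(1,2)] .
  then obtain s where "(if r \<in> Jblk G s \<and> c = blk_col G s r then w s else 0) \<noteq> 0"
    by (rule sum.not_neutral_contains_not_neutral)
  then show thesis
    using that by (auto split: if_splits)
qed

lemma single_nonzero_rows_Lmat: "single_nonzero_rows (Lmat n N G w)"
  unfolding single_nonzero_rows_def
proof (intro allI impI)
  fix r i j
  assume "r < dim_row (Lmat n N G w)" "i < dim_col (Lmat n N G w)" "j < dim_col (Lmat n N G w)"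
    and nz: "Lmat n N G w $$ (r, i) \<noteq> 0" "Lmat n N G w $$ (r, j) \<noteq> 0"
  then have dims: "r < grp_off G N" "i < n" "j < n"
    using Lmat_carrier[of n N G w] by auto
  obtain s where "r \<in> Jblk G s" "i = blk_col G s r"
    using Lmat_nonzero_imp_blk_col[OF dims(1,2) nz(1)] .
  moreover obtain s' where "r \<in> Jblk G s'" "j = blk_col G s' r"
    using Lmat_nonzero_imp_blk_col[OF dims(1,3) nz(2)] .
  ultimately show "i = j"
    using Jblk_disjoint by blast
qed

lemma Lhat_carrier: "Lhat n N G w I \<in> carrier_mat (grp_off G N) n"
  unfolding Lhat_def coord_proj_def using Lmat_carrier by auto

lemma index_Lhat:
  assumes "r < grp_off G N" "c < n"
  shows "Lhat n N G w I $$ (r, c)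
    = (if r \<in> Ezset G I \<and> c \<notin> Eset n N G I then 0 else Lmat n N G w $$ (r, c))"
  unfolding Lhat_def using Lmat_carrier assms by (rule index_mask_coord_proj)

lemma single_nonzero_rows_Lhat: "single_nonzero_rows (Lhat n N G w I)"
  using single_nonzero_rows_Lmat[of n N G w] Lhat_carrier[of n N G w I] Lmat_carrier[of n N G w]
  unfolding single_nonzero_rows_def by (auto simp: index_Lhat split: if_splits)

lemma index_Lhat_Jblk:
  assumes "t < N" "t \<notin> I" "r \<in> Jblk G t" "c < n"
  shows "Lhat n N G w I $$ (r, c) = (if c = blk_col G t r then w t else 0)"
proof -
  have "r \<notin> Ezset G I"
    using assms Jblk_disjoint unfolding Ezset_def by blast
  then show ?thesis
    using assms Jblk_subset[of t N G] by (auto simp: index_Lhat index_Lmat_Jblk)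
qed

section \<open>The dual vector on the blocks of excluded groups\<close>

lemma index_u_of_Jblk:
  assumes G_sub: "G t \<subseteq> {0..<n}" and t: "t < N" "t \<notin> I" and r: "r \<in> Jblk G t"
    and inv: "invertible_mat (transpose_mat (Lhat n N G w I) * Lhat n N G w I)"
    and b: "b \<in> carrier_vec n"
  shows "u_of n N G w I b $ r = w t * b $ blk_col G t r
    / (transpose_mat (Lhat n N G w I) * Lhat n N G w I) $$ (blk_col G t r, blk_col G t r)"
proof -
  define M where "M = Lhat n N G w I"
  define c where "c = blk_col G t r"
  define v where "v = mat_inv (transpose_mat M * M) *\<^sub>v b"
  have M: "M \<in> carrier_mat (grp_off G N) n"
    unfolding M_def by (rule Lhat_carrier)
  have D: "transpose_mat M * M \<in> carrier_mat n n"
    using M by auto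
  note B = mat_inv_right[OF inv[folded M_def] D]
  have c: "c < n" and rp: "r < grp_off G N"
    unfolding c_def using blk_col_less[OF G_sub r] Jblk_subset[OF t(1), of G] r by auto
  have v: "v \<in> carrier_vec n"
    unfolding v_def using B(1) b by simp
  have "u_of n N G w I b = M *\<^sub>v v"
    unfolding u_of_def Let_def M_def[symmetric] v_def using M B(1) b by simp
  then have "u_of n N G w I b $ r = (\<Sum>l\<in>{0..<n}. M $$ (r, l) * v $ l)"
    using M v rp by (simp add: scalar_prod_def)
  also have "\<dots> = (\<Sum>l\<in>{0..<n}. if l = c then w t * v $ c else 0)"
    by (rule sum.cong) (use index_Lhat_Jblk[OF t r] in \<open>auto simp: M_def c_def\<close>)
  also have "\<dots> = w t * (b $ c / (transpose_mat M * M) $$ (c, c))"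
    using c diagonal_mat_right_inverse_mult_vec[OF diagonal_gram_mat D B(1,2) b c]
      single_nonzero_rows_Lhat unfolding M_def v_def by simp
  finally show ?thesis
    unfolding M_def c_def by simp
qed

lemma subnorm_u_of_Jblk_le:
  assumes G_sub: "G t \<subseteq> {0..<n}" and t: "t < N" "t \<notin> I" and w: "w t > 0"
    and inv: "invertible_mat (transpose_mat (Lhat n N G w I) * Lhat n N G w I)"
    and b: "b \<in> carrier_vec n"
  shows "subnorm (u_of n N G w I b) (Jblk G t) \<le> subnorm b (G t) / w t"
proof -
  have fin: "finite (G t)"
    using G_sub finite_subset by blast
  have entry: "(u_of n N G w I b $ r)\<^sup>2 \<le> (b $ blk_col G t r)\<^sup>2 / (w t)\<^sup>2" if r: "r \<in> Jblk G t" for r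
  proof -
    define d where "d = (transpose_mat (Lhat n N G w I) * Lhat n N G w I) $$ (blk_col G t r, blk_col G t r)"
    have "(Lhat n N G w I $$ (r, blk_col G t r))\<^sup>2 \<le> d"
      unfolding d_def using Lhat_carrier[of n N G w I] Jblk_subset[OF t(1), of G] r blk_col_less[OF G_sub r]
      by (intro gram_mat_diag_ge) auto
    then have d: "(w t)\<^sup>2 \<le> d"
      using index_Lhat_Jblk[OF t r blk_col_less[OF G_sub r]] by simp
    have "(u_of n N G w I b $ r)\<^sup>2 = (w t)\<^sup>2 * (b $ blk_col G t r)\<^sup>2 / d\<^sup>2"
      using index_u_of_Jblk[OF G_sub t r inv b] unfolding d_def by (simp add: power_divide power_mult_distrib)
    also have "\<dots> \<le> (w t)\<^sup>2 * (b $ blk_col G t r)\<^sup>2 / ((w t)\<^sup>2)\<^sup>2"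
      using d w by (intro divide_left_mono power_mono mult_pos_pos less_le_trans[OF _ d]) auto
    also have "\<dots> = (b $ blk_col G t r)\<^sup>2 / (w t)\<^sup>2"
      using w by (simp add: power2_eq_square)
    finally show ?thesis .
  qed
  have "(\<Sum>r\<in>Jblk G t. (u_of n N G w I b $ r)\<^sup>2) \<le> (\<Sum>r\<in>Jblk G t. (b $ blk_col G t r)\<^sup>2 / (w t)\<^sup>2)"
    using entry by (rule sum_mono)
  also have "\<dots> = (\<Sum>c\<in>G t. (b $ c)\<^sup>2) / (w t)\<^sup>2"
    using sum.reindex_bij_betw[OF bij_betw_blk_col[of G t, OF fin], of "\<lambda>c. (b $ c)\<^sup>2 / (w t)\<^sup>2"]
    by (simp add: sum_divide_distrib)
  finally show ?thesis
    unfolding subnorm_def using w by (metis real_sqrt_le_mono real_sqrt_divide real_sqrt_abs abs_of_pos)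
qed

theorem lemma4p1:
  fixes n N m :: nat and G :: "nat \<Rightarrow> nat set" and w :: "nat \<Rightarrow> real"
    and A :: "real mat" and y :: "real vec" and lam :: real
    and Is :: "nat \<Rightarrow> nat set" and x :: "nat \<Rightarrow> real vec"
    and Ibar :: "nat set" and xt :: "real vec"
  assumes G_ne: "\<forall>t<N. G t \<noteq> {}"
    and G_sub: "\<forall>t<N. G t \<subseteq> {0..<n}"
    and G_cover: "(\<Union>t<N. G t) = {0..<n}"
    and w_pos: "\<forall>t<N. w t > 0"
    and A_dim: "A \<in> carrier_mat m n"
    and y_dim: "y \<in> carrier_vec m"
    and lam_pos: "lam > 0"
    and Lhat_inv: "\<forall>I \<subseteq> {0..<N}. invertible_mat
        (transpose_mat (Lhat n N G w I) * Lhat n N G w I)"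
    and I0: "Is 0 \<subseteq> {0..<N}"
    and x_dim: "\<forall>k. x k \<in> carrier_vec n"
    and scheme: "ada_option1 N G w A y lam Is x \<or> ada_option2 n N G w A y lam Is x"
    and stab: "\<exists>K. \<forall>k\<ge>K. Is k = Ibar"
    and xt_dim: "xt \<in> carrier_vec n"
    and conv: "\<forall>i<n. (\<lambda>k. x k $ i) \<longlonglongrightarrow> xt $ i"
  shows "\<forall>t \<in> {0..<N} - Ibar.
           subnorm (u_of n N G w Ibar (beta_of A y lam xt)) (Jblk G t) \<le> 1"
proof
  fix t assume t: "t \<in> {0..<N} - Ibar"
  obtain K where K: "\<forall>k\<ge>K. Is k = Ibar"
    using stab by blast
  have beta_dim: "beta_of A y lam v \<in> carrier_vec n" for v
    using A_dim unfolding beta_of_def carrier_vec_def by simp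
  have beta_lim: "\<forall>j<n. (\<lambda>k. beta_of A y lam (x (Suc k)) $ j) \<longlonglongrightarrow> beta_of A y lam xt $ j"
    using tendsto_beta_of[OF A_dim y_dim x_dim xt_dim conv] by (auto intro: LIMSEQ_Suc)
  from scheme show "subnorm (u_of n N G w Ibar (beta_of A y lam xt)) (Jblk G t) \<le> 1"
  proof
    assume opt: "ada_option1 N G w A y lam Is x"
    note update = opt[unfolded ada_option1_def]
    have Gt: "G t \<subseteq> {0..<n}"
      using G_sub t by simp
    have "(\<lambda>k. subnorm (beta_of A y lam (x (Suc k))) (G t)) \<longlonglongrightarrow> subnorm (beta_of A y lam xt) (G t)"
      using Gt beta_lim by (intro tendsto_subnorm) (auto intro: finite_subset)
    moreover have "\<forall>k\<ge>K. subnorm (beta_of A y lam (x (Suc k))) (G t) \<le> w t"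
      using union_update_stable_excludes[OF update K t] by fastforce
    ultimately have beta_bound: "subnorm (beta_of A y lam xt) (G t) \<le> w t"
      by (intro LIMSEQ_le_const2) auto
    have "Ibar \<subseteq> {0..<N}"
      using union_update_subset[OF update I0, of K] K by auto
    then have "subnorm (u_of n N G w Ibar (beta_of A y lam xt)) (Jblk G t)
        \<le> subnorm (beta_of A y lam xt) (G t) / w t"
      by (intro subnorm_u_of_Jblk_le[of G t n N Ibar w]) (use Gt w_pos Lhat_inv t beta_dim in auto)
    also have "\<dots> \<le> 1"
      using beta_bound w_pos t by simp
    finally show ?thesis .
  next
    assume opt: "ada_option2 n N G w A y lam Is x"
    note update = opt[unfolded ada_option2_def]
    have "\<forall>r<grp_off G N. (\<lambda>k. u_of n N G w Ibar (beta_of A y lam (x (Suc k))) $ r)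
        \<longlonglongrightarrow> u_of n N G w Ibar (beta_of A y lam xt) $ r"
      using tendsto_mult_mat_vec[OF beta_lim] beta_dim Lhat_carrier[of n N G w Ibar]
      unfolding u_of_def Let_def by auto
    then have "(\<lambda>k. subnorm (u_of n N G w Ibar (beta_of A y lam (x (Suc k)))) (Jblk G t))
        \<longlonglongrightarrow> subnorm (u_of n N G w Ibar (beta_of A y lam xt)) (Jblk G t)"
      using Jblk_subset[of t N G] t by (intro tendsto_subnorm) (auto simp: Jblk_def)
    moreover have "\<forall>k\<ge>K. subnorm (u_of n N G w Ibar (beta_of A y lam (x (Suc k)))) (Jblk G t) \<le> 1"
      using union_update_stable_excludes[OF update K t] K by fastforce
    ultimately show ?thesis
      by (intro LIMSEQ_le_const2) auto
  qed
qed

end
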